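(* Let $A$ be a honeycomb array with $n\geq 1$ dots. Then $n=2r+1$ for some non-negative integer $r$ and $A$ is a honeycomb array of radius $r$, i.e. its dots are contained in a Lee sphere of radius $r$. In particular, a honeycomb array consists of an odd number of dots.
   Context: Model the cells (hexagons) of the hexagonal grid by $\mathbb{Z}^2$, where cell $(x,y)$ is adjacent to the six cells $(x\pm1,y)$, $(x,y\pm1)$, $(x+1,y+1)$, $(x-1,y-1)$. The "rows" of the hexagonal grid in its three natural directions are the sets $\{y=c\}$, $\{x=c\}$ and $\{x-y=c\}$ for $c\in\mathbb{Z}$; two rows of the same direction are consecutive if their constants differ by $1$. A hexagonal permutation with $n$ dots is a set $\pi$ of $n$ cells such that, for each of the three directions, the rows of that direction containing a dot of $\pi$ are exactly $n$ consecutive rows, and each of these rows contains exactly one dot. A set of $n$ dots has the distinct differences property if the $n(n-1)$ vector differences $p-q$ (for ordered pairs of distinct dots $p\neq q$) are pairwise different. A honeycomb array is a hexagonal permutation with the distinct differences property. The distance between cells $(x,y)$ and $(a,b)$ is the length of a shortest path of adjacent cells joining them, namely $\max(|x-a|,|y-b|,|(x-a)-(y-b)|)$; a Lee sphere of radius $r$ with centre $(a,b)$ is the set of cells at distance at most $r$ from $(a,b)$. A honeycomb array of radius $r$ is a honeycomb array with $2r+1$ dots contained in a Lee sphere of radius $r$. *)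

theory Defs
  imports Main
begin

type_synonym cell = "int \<times> int"

text \<open>The three row directions: rows are the level sets of these functions.\<close>
definition row_y :: "cell \<Rightarrow> int" where "row_y p = snd p"
definition row_x :: "cell \<Rightarrow> int" where "row_x p = fst p"
definition row_xy :: "cell \<Rightarrow> int" where "row_xy p = fst p - snd p"

definition rows_ok :: "(cell \<Rightarrow> int) \<Rightarrow> cell set \<Rightarrow> nat \<Rightarrow> bool" where
  "rows_ok f P n \<longleftrightarrow> (\<exists>c. f ` P = {c..<c + int n}) \<and>
     (\<forall>k \<in> f ` P. card {p \<in> P. f p = k} = 1)"

definition hexagonal_permutation :: "cell set \<Rightarrow> nat \<Rightarrow> bool" where
  "hexagonal_permutation P n \<longleftrightarrow> finite P \<and> card P = n \<and>
     rows_ok row_y P n \<and> rows_ok row_x P n \<and> rows_ok row_xy P n"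

definition cdiff :: "cell \<Rightarrow> cell \<Rightarrow> cell" where
  "cdiff p q = (fst p - fst q, snd p - snd q)"

definition distinct_differences :: "cell set \<Rightarrow> bool" where
  "distinct_differences P \<longleftrightarrow>
     inj_on (\<lambda>(p, q). cdiff p q) {(p, q). p \<in> P \<and> q \<in> P \<and> p \<noteq> q}"

definition honeycomb_array :: "cell set \<Rightarrow> nat \<Rightarrow> bool" where
  "honeycomb_array P n \<longleftrightarrow> hexagonal_permutation P n \<and> distinct_differences P"

definition hex_dist :: "cell \<Rightarrow> cell \<Rightarrow> int" where
  "hex_dist p q = max \<bar>fst p - fst q\<bar> (max \<bar>snd p - snd q\<bar>
                      \<bar>(fst p - fst q) - (snd p - snd q)\<bar>)"

definition lee_sphere :: "cell \<Rightarrow> nat \<Rightarrow> cell set" where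
  "lee_sphere c r = {p. hex_dist p c \<le> int r}"

definition honeycomb_array_radius :: "cell set \<Rightarrow> nat \<Rightarrow> bool" where
  "honeycomb_array_radius P r \<longleftrightarrow> honeycomb_array P (2 * r + 1) \<and>
     (\<exists>c. P \<subseteq> lee_sphere c r)"

end

theory Submission
  imports Defs
begin

text \<open>Summing the row index of every dot in each of the three directions gives, for rows
  \<open>a..<a+n\<close>, \<open>b..<b+n\<close> and \<open>c..<c+n\<close>, the values \<open>n(2a+n-1)/2\<close>, \<open>n(2b+n-1)/2\<close> and
  \<open>n(2c+n-1)/2\<close>. Since the x-y index of a cell is the difference of its other two indices,
  the third sum is the difference of the first two, whence \<open>2c + n - 1 = 2(a - b)\<close>: so
  \<open>n = 2r + 1\<close> with \<open>r = a - b - c\<close>, and the three strips of occupied rows meet exactly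
  in the Lee sphere of radius \<open>r\<close> around \<open>(a + r, b + r)\<close>.\<close>

lemma double_sum_int_interval:
  "2 * (\<Sum>k\<in>{c..<c + int n}. k) = int n * (2 * c + int n - 1)"
proof (induction n)
  case 0
  then show ?case by simp
next
  case (Suc n)
  have "{c..<c + int (Suc n)} = insert (c + int n) {c..<c + int n}" by auto
  then have "(\<Sum>k\<in>{c..<c + int (Suc n)}. k) = (c + int n) + (\<Sum>k\<in>{c..<c + int n}. k)"
    by simp
  with Suc show ?case by (simp add: algebra_simps)
qed

lemma rows_ok_inj_on:
  assumes "rows_ok f P n"
  shows "inj_on f P"
proof (rule inj_onI)
  fix p q assume pq: "p \<in> P" "q \<in> P" "f p = f q"
  with assms have "card {x \<in> P. f x = f p} = 1" unfolding rows_ok_def by blast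
  then obtain z where "{x \<in> P. f x = f p} = {z}" by (rule card_1_singletonE)
  moreover from pq have "p \<in> {x \<in> P. f x = f p}" "q \<in> {x \<in> P. f x = f p}" by auto
  ultimately show "p = q" by auto
qed

lemma rows_ok_double_sum:
  assumes "rows_ok f P n" and "f ` P = {c..<c + int n}"
  shows "2 * (\<Sum>p\<in>P. f p) = int n * (2 * c + int n - 1)"
proof -
  have "(\<Sum>p\<in>P. f p) = (\<Sum>k\<in>f ` P. k)"
    using sum.reindex[OF rows_ok_inj_on[OF assms(1)], of id] by simp
  with assms(2) show ?thesis by (simp add: double_sum_int_interval)
qed

lemma hexagonal_permutation_rows:
  assumes "hexagonal_permutation P n" and "n \<ge> 1"
  obtains a b c where "row_x ` P = {a..<a + int n}" "row_y ` P = {b..<b + int n}"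
    "row_xy ` P = {c..<c + int n}" "2 * c + int n - 1 = 2 * (a - b)"
proof -
  from assms(1) have rx: "rows_ok row_x P n" and ry: "rows_ok row_y P n"
    and rxy: "rows_ok row_xy P n" unfolding hexagonal_permutation_def by auto
  then obtain a b c where a: "row_x ` P = {a..<a + int n}" and b: "row_y ` P = {b..<b + int n}"
    and c: "row_xy ` P = {c..<c + int n}" unfolding rows_ok_def by meson
  have "(\<Sum>p\<in>P. row_xy p) = (\<Sum>p\<in>P. row_x p) - (\<Sum>p\<in>P. row_y p)"
    unfolding row_xy_def row_x_def row_y_def by (simp add: sum_subtractf)
  then have "int n * (2 * c + int n - 1) = int n * (2 * a + int n - 1) - int n * (2 * b + int n - 1)"
    using rows_ok_double_sum[OF rx a] rows_ok_double_sum[OF ry b] rows_ok_double_sum[OF rxy c]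
    by (simp add: algebra_simps)
  then have "int n * (2 * c + int n - 1) = int n * (2 * (a - b))" by (simp add: algebra_simps)
  with assms(2) have "2 * c + int n - 1 = 2 * (a - b)" by simp
  with a b c show ?thesis by (rule that)
qed

lemma hexagonal_permutation_in_lee_sphere:
  assumes "hexagonal_permutation P n" and "n \<ge> 1"
  obtains r center where "n = 2 * r + 1" "P \<subseteq> lee_sphere center r"
proof -
  obtain a b c where a: "row_x ` P = {a..<a + int n}" and b: "row_y ` P = {b..<b + int n}"
    and c: "row_xy ` P = {c..<c + int n}" and abc: "2 * c + int n - 1 = 2 * (a - b)"
    using hexagonal_permutation_rows[OF assms] .
  define r where "r = nat (a - b - c)"
  have n: "int n = 2 * int r + 1" using abc assms(2) unfolding r_def by simp
  have "P \<subseteq> lee_sphere (a + int r, b + int r) r"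
  proof
    fix p assume "p \<in> P"
    with a b c have "row_x p \<in> {a..<a + int n}" "row_y p \<in> {b..<b + int n}"
      "row_xy p \<in> {c..<c + int n}" by auto
    with n abc show "p \<in> lee_sphere (a + int r, b + int r) r"
      unfolding lee_sphere_def hex_dist_def row_x_def row_y_def row_xy_def r_def
      by (cases p) auto
  qed
  moreover from n have "n = 2 * r + 1" by simp
  ultimately show ?thesis using that by blast
qed

theorem corollary2:
  fixes A :: "cell set" and n :: nat
  assumes "honeycomb_array A n" and "n \<ge> 1"
  shows "\<exists>r::nat. n = 2 * r + 1 \<and> honeycomb_array_radius A r"
proof -
  from assms(1) have "hexagonal_permutation A n" unfolding honeycomb_array_def by blast
  then obtain r center where "n = 2 * r + 1" "A \<subseteq> lee_sphere center r"
    using hexagonal_permutation_in_lee_sphere assms(2) by blast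
  with assms(1) show ?thesis unfolding honeycomb_array_radius_def by blast
qed

end
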